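(* Let $k\ge 2$ and let $p_1,\dots,p_k\ge 2$ be integers. Then the iterated permutational wreath product $W=C_{p_k}\wr\cdots\wr C_{p_1}$ satisfies $cw(W)=1$.
   Context: Each cyclic group $C_{p_i}$ acts on $\{1,\dots,p_i\}$ by cyclic shifts, and $H\wr C_{p}=H^{p}\rtimes C_{p}$ is the permutational wreath product; the iterated wreath product is associative. The commutator width $cw(G)$ is the least $n$ such that every element of $G'$ is a product of at most $n$ commutators. *)

theory Defs
  imports "HOL-Algebra.Algebra"
begin

fun comm_prods :: "('a, 'b) monoid_scheme \<Rightarrow> nat \<Rightarrow> 'a set" where
  "comm_prods G 0 = {\<one>\<^bsub>G\<^esub>}"
| "comm_prods G (Suc n) = comm_prods G n \<union>
     {c \<otimes>\<^bsub>G\<^esub> z | c z. c \<in> derived_set G (carrier G) \<and> z \<in> comm_prods G n}"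

definition commutator_width :: "('a, 'b) monoid_scheme \<Rightarrow> nat" where
  "commutator_width G = (LEAST n. derived G (carrier G) \<subseteq> comm_prods G n)"

fun wr_points :: "nat list \<Rightarrow> nat list set" where
  "wr_points [] = {[]}"
| "wr_points (p # ps) = {i # x | i x. i < p \<and> x \<in> wr_points ps}"

text \<open>The element (f, a) of H \<wr> C_p = H^p \<rtimes> C_p, realised as a permutation of
  {0..<p} \<times> (points of H), acting by (i, x) \<mapsto> (i + a mod p, f i x);
  identity outside the point set.\<close>
definition wr_elem :: "nat \<Rightarrow> nat list set \<Rightarrow> (nat \<Rightarrow> nat list \<Rightarrow> nat list) \<Rightarrow> nat
    \<Rightarrow> nat list \<Rightarrow> nat list" where
  "wr_elem p S f a y = (case y of [] \<Rightarrow> ([] :: nat list)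
      | i # x \<Rightarrow> (if i < p \<and> x \<in> S then ((i + a) mod p) # f i x else i # x))"

text \<open>Carrier of C_{p_k} \<wr> ... \<wr> C_{p_1} for ps = [p_1,...,p_k] (C_{p_1} acts on top).\<close>
fun wr_carrier :: "nat list \<Rightarrow> (nat list \<Rightarrow> nat list) set" where
  "wr_carrier [] = {id}"
| "wr_carrier (p # ps) = {wr_elem p (wr_points ps) f a | f a.
      a < p \<and> (\<forall>i<p. f i \<in> wr_carrier ps)}"

definition wreath_tower :: "nat list \<Rightarrow> (nat list \<Rightarrow> nat list) monoid" where
  "wreath_tower ps = \<lparr>carrier = wr_carrier ps, monoid.mult = (\<circ>), one = id\<rparr>"

end

theory Submission
  imports Defs
begin

(* Write an element of W = H wr C_p as a pair (f, a) with f : Z/p -> H. The shift a and the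
   product of the classes of the f i in the abelianisation H/H' are homomorphisms from W to
   abelian groups, so W' lies in their common kernel. Conversely, suppose every element of H'
   is a single commutator. An element (G, 0) of the kernel has ordered product
   G (p-1) ... G 0 = [x, y] in H', and with U j = G j ... G 0 y x, u = (U, 0) and v the cyclic
   shift carrying y in its last coordinate one checks (G, 0) v u = u v, i.e. (G, 0) = [u, v].
   So by induction up the tower W' consists of single commutators, and W' is nontrivial once
   there are two levels, since a shift does not commute with an element acting in one block. *)

lemma carrier_wreath_tower: "carrier (wreath_tower ps) = wr_carrier ps"
  by (simp add: wreath_tower_def)

lemma mult_wreath_tower: "x \<otimes>\<^bsub>wreath_tower ps\<^esub> y = x \<circ> y"
  by (simp add: wreath_tower_def)

lemma one_wreath_tower: "\<one>\<^bsub>wreath_tower ps\<^esub> = id"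
  by (simp add: wreath_tower_def)

lemma wr_elem_comp:
  assumes "0 < p" and "\<And>i x. i < p \<Longrightarrow> x \<in> S \<Longrightarrow> g i x \<in> S"
  shows "wr_elem p S f a \<circ> wr_elem p S g b = wr_elem p S (\<lambda>i. f ((i + b) mod p) \<circ> g i) (a + b)"
proof
  fix y
  show "(wr_elem p S f a \<circ> wr_elem p S g b) y = wr_elem p S (\<lambda>i. f ((i + b) mod p) \<circ> g i) (a + b) y"
  proof (cases y)
    case (Cons i x)
    have "((i + b) mod p + a) mod p = (i + (a + b)) mod p"
      by (metis add.assoc add.commute mod_add_left_eq)
    with assms Cons show ?thesis
      by (auto simp: wr_elem_def)
  qed (simp add: wr_elem_def)
qed

lemma wr_elem_cong:
  assumes "a mod p = b mod p" and "\<And>i x. i < p \<Longrightarrow> x \<in> S \<Longrightarrow> f i x = g i x"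
  shows "wr_elem p S f a = wr_elem p S g b"
proof
  fix y
  have "(i + a) mod p = (i + b) mod p" for i
    using assms(1) by (metis mod_add_right_eq)
  then show "wr_elem p S f a y = wr_elem p S g b y"
    using assms(2) by (cases y) (auto simp: wr_elem_def)
qed

lemma wr_elem_id: "wr_elem p S (\<lambda>i. id) 0 = id"
proof
  fix y show "wr_elem p S (\<lambda>i. id) 0 y = id y"
    by (cases y) (auto simp: wr_elem_def)
qed

lemma wr_points_nonempty: "\<forall>q\<in>set ps. 0 < q \<Longrightarrow> wr_points ps \<noteq> {}"
  by (induction ps) auto

lemma wr_carrier_fixes_outside:
  "g \<in> wr_carrier ps \<Longrightarrow> x \<notin> wr_points ps \<Longrightarrow> g x = x"
  by (cases ps; cases x) (auto simp: wr_elem_def)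

lemma wr_carrier_maps_points:
  "g \<in> wr_carrier ps \<Longrightarrow> x \<in> wr_points ps \<Longrightarrow> g x \<in> wr_points ps"
  by (induction ps arbitrary: g x) (auto simp: wr_elem_def)

lemma wr_elem_in_wr_carrier:
  assumes "0 < p" and "\<forall>i<p. f i \<in> wr_carrier ps"
  shows "wr_elem p (wr_points ps) f a \<in> wr_carrier (p # ps)"
proof -
  have "wr_elem p (wr_points ps) f a = wr_elem p (wr_points ps) f (a mod p)"
    by (rule wr_elem_cong) simp_all
  moreover have "a mod p < p"
    using assms(1) by simp
  ultimately show ?thesis
    using assms(2) by auto
qed

lemma group_wreath_tower_Cons:
  assumes H: "group (wreath_tower ps)" and p: "0 < p"
  shows "group (wreath_tower (p # ps))"
proof -
  interpret H: group "wreath_tower ps" by (rule H)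
  note carrier_wreath_tower [simp] mult_wreath_tower [simp] one_wreath_tower [simp]
  let ?S = "wr_points ps"
  have mult: "wr_elem p ?S f a \<circ> wr_elem p ?S g b
      = wr_elem p ?S (\<lambda>i. f ((i + b) mod p) \<circ> g i) (a + b)"
    if "\<forall>i<p. g i \<in> wr_carrier ps" for f g a b
    using wr_elem_comp[OF p] wr_carrier_maps_points that by blast
  have closed: "wr_elem p ?S (\<lambda>i. f ((i + b) mod p) \<circ> g i) c \<in> wr_carrier (p # ps)"
    if "\<forall>i<p. f i \<in> wr_carrier ps" "\<forall>i<p. g i \<in> wr_carrier ps" for f g b c
    using that p H.m_closed by (intro wr_elem_in_wr_carrier) auto
  show ?thesis
  proof (rule groupI)
    fix x y
    assume "x \<in> carrier (wreath_tower (p # ps))" "y \<in> carrier (wreath_tower (p # ps))"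
    then show "x \<otimes>\<^bsub>wreath_tower (p # ps)\<^esub> y \<in> carrier (wreath_tower (p # ps))"
      using mult closed by auto
  next
    show "\<one>\<^bsub>wreath_tower (p # ps)\<^esub> \<in> carrier (wreath_tower (p # ps))"
      using wr_elem_in_wr_carrier[OF p, of "\<lambda>i. id" ps 0] H.one_closed by (simp add: wr_elem_id)
  next
    fix x assume "x \<in> carrier (wreath_tower (p # ps))"
    then obtain f a where x: "x = wr_elem p ?S f a" "a < p" "\<forall>i<p. f i \<in> wr_carrier ps"
      by auto
    define f' where "f' j = inv\<^bsub>wreath_tower ps\<^esub> (f ((j + (p - a)) mod p))" for j
    have f': "\<forall>i<p. f' i \<in> wr_carrier ps"
      using x(3) p H.inv_closed by (simp add: f'_def)
    have "wr_elem p ?S f' (p - a) \<circ> x = wr_elem p ?S (\<lambda>i. f' ((i + a) mod p) \<circ> f i) (p - a + a)"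
      using mult x by simp
    also have "\<dots> = wr_elem p ?S (\<lambda>i. id) 0"
    proof (rule wr_elem_cong)
      show "(p - a + a) mod p = 0 mod p"
        using x(2) by simp
      fix i y assume "i < p"
      then have "((i + a) mod p + (p - a)) mod p = i"
        using x(2) by (metis add.assoc le_add_diff_inverse less_imp_le_nat mod_add_left_eq
              mod_add_self2 mod_less)
      then show "(f' ((i + a) mod p) \<circ> f i) y = id y"
        using x(3) \<open>i < p\<close> H.l_inv[of "f i"] by (simp add: f'_def)
    qed
    finally show "\<exists>y\<in>carrier (wreath_tower (p # ps)).
        y \<otimes>\<^bsub>wreath_tower (p # ps)\<^esub> x = \<one>\<^bsub>wreath_tower (p # ps)\<^esub>"
      using wr_elem_in_wr_carrier[OF p f'] by (auto simp: wr_elem_id)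
  qed (simp_all add: o_assoc)
qed

lemma group_wreath_tower: "\<forall>q\<in>set ps. 0 < q \<Longrightarrow> group (wreath_tower ps)"
proof (induction ps)
  case Nil
  show ?case
    by (rule groupI) (auto simp: carrier_wreath_tower mult_wreath_tower one_wreath_tower)
next
  case (Cons p ps)
  then show ?case by (simp add: group_wreath_tower_Cons)
qed

lemma (in group) commutator_eq_iff:
  assumes "g \<in> carrier G" "u \<in> carrier G" "v \<in> carrier G"
  shows "g = u \<otimes> v \<otimes> inv u \<otimes> inv v \<longleftrightarrow> g \<otimes> (v \<otimes> u) = u \<otimes> v"
proof -
  have "u \<otimes> v \<otimes> inv u \<otimes> inv v = u \<otimes> v \<otimes> inv (v \<otimes> u)"
    using assms by (simp add: inv_mult_group m_assoc)
  then show ?thesis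
    using assms by (metis inv_solve_right m_closed)
qed

lemma (in group_hom) derived_subset_kernel:
  assumes "comm_group H"
  shows "derived G (carrier G) \<subseteq> kernel G H h"
  unfolding derived_def
proof (rule G.generate_subgroup_incl[OF _ subgroup_kernel])
  interpret H: comm_group H by (rule assms)
  have "a \<otimes>\<^bsub>H\<^esub> b \<otimes>\<^bsub>H\<^esub> inv\<^bsub>H\<^esub> a \<otimes>\<^bsub>H\<^esub> inv\<^bsub>H\<^esub> b = \<one>\<^bsub>H\<^esub>"
    if "a \<in> carrier H" "b \<in> carrier H" for a b
    using that by (simp add: H.m_comm[of a b] H.m_assoc)
  then show "derived_set G (carrier G) \<subseteq> kernel G H h"
    by (auto simp: kernel_def)
qed

lemma (in group) commutator_width_eq_1:
  assumes "derived G (carrier G) \<subseteq> derived_set G (carrier G)"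
    and "derived G (carrier G) \<noteq> {\<one>}"
  shows "commutator_width G = 1"
  unfolding commutator_width_def
proof (rule Least_equality)
  show "derived G (carrier G) \<subseteq> comm_prods G 1"
  proof
    fix c assume "c \<in> derived G (carrier G)"
    then have "c \<in> derived_set G (carrier G)"
      using assms(1) by blast
    moreover from this have "c = c \<otimes> \<one>"
      using derived_set_in_carrier[of "carrier G"] by auto
    ultimately show "c \<in> comm_prods G 1"
      by auto
  qed
next
  fix n assume n: "derived G (carrier G) \<subseteq> comm_prods G n"
  have "\<one> \<in> derived G (carrier G)"
    using derived_is_subgroup[of "carrier G"] subgroup.one_closed by auto
  then show "1 \<le> n"
    using n assms(2) by (cases n) auto
qed

lemma (in comm_monoid) finprod_rotate:
  fixes p b :: nat
  assumes "f \<in> {..<p} \<rightarrow> carrier G"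
  shows "finprod G (\<lambda>i. f ((i + b) mod p)) {..<p} = finprod G f {..<p}"
proof (cases "p = 0")
  case False
  have inj: "inj_on (\<lambda>i. (i + b) mod p) {..<p}"
  proof (rule inj_onI)
    fix i j assume ij: "i \<in> {..<p}" "j \<in> {..<p}" and "(i + b) mod p = (j + b) mod p"
    then obtain q q' where "i + b + p * q = j + b + p * q'"
      using nat_mod_eq_iff by blast
    then have "i mod p = j mod p"
      using nat_mod_eq_iff by auto
    then show "i = j"
      using ij by simp
  qed
  have "(\<lambda>i. (i + b) mod p) ` {..<p} = {..<p}"
    using inj False by (intro endo_inj_surj) auto
  then show ?thesis
    using finprod_reindex[of f "\<lambda>i. (i + b) mod p" "{..<p}"] assms inj by simp
qed simp

primrec desc_prod :: "('a, 'b) monoid_scheme \<Rightarrow> (nat \<Rightarrow> 'a) \<Rightarrow> nat \<Rightarrow> 'a" where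
  "desc_prod M f 0 = f 0"
| "desc_prod M f (Suc j) = f (Suc j) \<otimes>\<^bsub>M\<^esub> desc_prod M f j"

lemma (in monoid) desc_prod_closed:
  "\<forall>i\<le>j. f i \<in> carrier G \<Longrightarrow> desc_prod G f j \<in> carrier G"
  by (induction j) auto

lemma (in group_hom) desc_prod_hom:
  assumes "comm_group H" and "\<forall>i\<le>j. f i \<in> carrier G"
  shows "h (desc_prod G f j) = finprod H (\<lambda>i. h (f i)) {..j}"
  using assms(2)
proof (induction j)
  case 0
  interpret H: comm_group H by (rule assms(1))
  show ?case
    using 0 by simp
next
  case (Suc j)
  interpret H: comm_group H by (rule assms(1))
  have "h (desc_prod G f (Suc j)) = h (f (Suc j)) \<otimes>\<^bsub>H\<^esub> finprod H (\<lambda>i. h (f i)) {..j}"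
    using Suc G.desc_prod_closed by simp
  also have "\<dots> = finprod H (\<lambda>i. h (f i)) (insert (Suc j) {..j})"
    using Suc by simp
  finally show ?case
    by (simp add: atMost_Suc)
qed

locale wreath_step =
  fixes p :: nat and ps :: "nat list"
  assumes p_pos: "0 < p" and ps_pos: "\<forall>q\<in>set ps. 0 < q"
begin

abbreviation "S \<equiv> wr_points ps"
abbreviation "H \<equiv> wreath_tower ps"
abbreviation "W \<equiv> wreath_tower (p # ps)"
abbreviation "Hab \<equiv> H Mod derived H (carrier H)"
abbreviation "ab \<equiv> (\<lambda>h. derived H (carrier H) #>\<^bsub>H\<^esub> h)"

sublocale H: group H
  using group_wreath_tower ps_pos .

sublocale W: group W
  using group_wreath_tower p_pos ps_pos by simp

sublocale Hab: comm_group Hab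
  by (rule H.derived_quot_is_comm_group)

sublocale ab: group_hom H Hab ab
  using H.derived_quot_is_group normal.r_coset_hom_Mod[OF H.derived_self_is_normal]
  by (simp add: group_hom_def group_hom_axioms_def)

lemma wr_elem_mult:
  "\<forall>i<p. g i \<in> carrier H \<Longrightarrow> wr_elem p S f a \<otimes>\<^bsub>W\<^esub> wr_elem p S g b
    = wr_elem p S (\<lambda>i. f ((i + b) mod p) \<otimes>\<^bsub>H\<^esub> g i) (a + b)"
  using wr_elem_comp[OF p_pos] wr_carrier_maps_points
  by (auto simp: carrier_wreath_tower mult_wreath_tower)

lemma wr_elem_closed: "\<forall>i<p. f i \<in> carrier H \<Longrightarrow> wr_elem p S f a \<in> carrier W"
  using wr_elem_in_wr_carrier[OF p_pos] by (simp add: carrier_wreath_tower)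

lemma carrier_WE:
  assumes "g \<in> carrier W"
  obtains f a where "g = wr_elem p S f a" "a < p" "\<forall>i<p. f i \<in> carrier H"
  using assms by (auto simp: carrier_wreath_tower)

definition base_point :: "nat list" where
  "base_point = (SOME x. x \<in> S)"

definition coord :: "(nat list \<Rightarrow> nat list) \<Rightarrow> nat \<Rightarrow> nat list \<Rightarrow> nat list" where
  "coord g i = (\<lambda>x. if x \<in> S then tl (g (i # x)) else x)"

definition shift :: "(nat list \<Rightarrow> nat list) \<Rightarrow> nat" where
  "shift g = hd (g (0 # base_point))"

definition coord_prod :: "(nat list \<Rightarrow> nat list) \<Rightarrow> (nat list \<Rightarrow> nat list) set" where
  "coord_prod g = finprod Hab (\<lambda>i. ab (coord g i)) {..<p}"

lemma base_point_in: "base_point \<in> S"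
  unfolding base_point_def using wr_points_nonempty[OF ps_pos] by (simp add: some_in_eq)

lemma coord_wr_elem:
  assumes "\<forall>i<p. f i \<in> carrier H" "i < p"
  shows "coord (wr_elem p S f a) i = f i"
proof
  fix x show "coord (wr_elem p S f a) i x = f i x"
    using assms wr_carrier_fixes_outside[of "f i" ps x]
    by (auto simp: coord_def wr_elem_def carrier_wreath_tower)
qed

lemma shift_wr_elem: "shift (wr_elem p S f a) = a mod p"
  using base_point_in p_pos by (simp add: shift_def wr_elem_def)

lemma coord_closed: "g \<in> carrier W \<Longrightarrow> i < p \<Longrightarrow> coord g i \<in> carrier H"
  by (elim carrier_WE) (simp add: coord_wr_elem)

lemma shift_less: "g \<in> carrier W \<Longrightarrow> shift g < p"
  using p_pos by (elim carrier_WE) (simp add: shift_wr_elem)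

lemma wr_elem_coord_shift: "g \<in> carrier W \<Longrightarrow> g = wr_elem p S (coord g) (shift g)"
proof (elim carrier_WE)
  fix f a assume g: "g = wr_elem p S f a" "a < p" "\<forall>i<p. f i \<in> carrier H"
  have "wr_elem p S f a = wr_elem p S (coord g) (shift g)"
    by (rule wr_elem_cong) (use g in \<open>simp_all add: coord_wr_elem shift_wr_elem\<close>)
  then show "g = wr_elem p S (coord g) (shift g)"
    using g(1) by simp
qed

lemma shift_hom: "(\<lambda>g. int (shift g)) \<in> hom W (integer_mod_group p)"
proof (rule homI)
  fix g assume "g \<in> carrier W"
  then show "int (shift g) \<in> carrier (integer_mod_group p)"
    using shift_less p_pos by (simp add: carrier_integer_mod_group)
next
  fix g h assume "g \<in> carrier W" "h \<in> carrier W"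
  then show "int (shift (g \<otimes>\<^bsub>W\<^esub> h))
      = int (shift g) \<otimes>\<^bsub>integer_mod_group p\<^esub> int (shift h)"
    by (elim carrier_WE) (simp add: wr_elem_mult shift_wr_elem of_nat_mod)
qed

sublocale shift: group_hom W "integer_mod_group p" "\<lambda>g. int (shift g)"
  by (simp add: group_hom_def group_hom_axioms_def W.is_group shift_hom)

lemma coord_prod_wr_elem:
  assumes "\<forall>i<p. f i \<in> carrier H"
  shows "coord_prod (wr_elem p S f a) = finprod Hab (\<lambda>i. ab (f i)) {..<p}"
  unfolding coord_prod_def
  by (rule Hab.finprod_cong') (use assms in \<open>auto simp: coord_wr_elem\<close>)

lemma coord_prod_mult:
  assumes "g \<in> carrier W" "h \<in> carrier W"
  shows "coord_prod (g \<otimes>\<^bsub>W\<^esub> h) = coord_prod g \<otimes>\<^bsub>Hab\<^esub> coord_prod h"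
proof -
  obtain f a where g: "g = wr_elem p S f a" "\<forall>i<p. f i \<in> carrier H"
    using assms(1) by (elim carrier_WE)
  obtain k b where h: "h = wr_elem p S k b" "\<forall>i<p. k i \<in> carrier H"
    using assms(2) by (elim carrier_WE)
  have f: "(\<lambda>i. ab (f i)) \<in> {..<p} \<rightarrow> carrier Hab"
    and k: "(\<lambda>i. ab (k i)) \<in> {..<p} \<rightarrow> carrier Hab"
    using g h by auto
  have f': "(\<lambda>i. ab (f ((i + b) mod p))) \<in> {..<p} \<rightarrow> carrier Hab"
    using g p_pos by auto
  have "coord_prod (g \<otimes>\<^bsub>W\<^esub> h)
      = finprod Hab (\<lambda>i. ab (f ((i + b) mod p)) \<otimes>\<^bsub>Hab\<^esub> ab (k i)) {..<p}"
    unfolding coord_prod_def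
  proof (rule Hab.finprod_cong')
    fix i assume i: "i \<in> {..<p}"
    have "\<forall>j<p. f ((j + b) mod p) \<otimes>\<^bsub>H\<^esub> k j \<in> carrier H"
      using g h p_pos by auto
    then have "coord (g \<otimes>\<^bsub>W\<^esub> h) i = f ((i + b) mod p) \<otimes>\<^bsub>H\<^esub> k i"
      using g h i by (simp add: wr_elem_mult coord_wr_elem)
    then show "ab (coord (g \<otimes>\<^bsub>W\<^esub> h) i) = ab (f ((i + b) mod p)) \<otimes>\<^bsub>Hab\<^esub> ab (k i)"
      using g h i p_pos by simp
  qed (use f' k in \<open>auto intro!: Hab.m_closed simp del: mult_FactGroup\<close>)
  also have "\<dots> = finprod Hab (\<lambda>i. ab (f i)) {..<p} \<otimes>\<^bsub>Hab\<^esub> finprod Hab (\<lambda>i. ab (k i)) {..<p}"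
    using Hab.finprod_multf[OF f' k] Hab.finprod_rotate[OF f, of b] by simp
  also have "\<dots> = coord_prod g \<otimes>\<^bsub>Hab\<^esub> coord_prod h"
    using g h by (simp add: coord_prod_wr_elem)
  finally show ?thesis .
qed

lemma coord_prod_hom: "coord_prod \<in> hom W Hab"
proof (rule homI)
  fix g assume "g \<in> carrier W"
  then show "coord_prod g \<in> carrier Hab"
    unfolding coord_prod_def by (intro Hab.finprod_closed) (auto simp: coord_closed)
qed (rule coord_prod_mult)

sublocale coord_prod: group_hom W Hab coord_prod
  by (simp add: group_hom_def group_hom_axioms_def W.is_group Hab.is_group coord_prod_hom)

lemma wr_elem_commutator:
  assumes G: "\<forall>i<p. G i \<in> carrier H"
    and xy: "x \<in> carrier H" "y \<in> carrier H"
    and prod: "desc_prod H G (p - 1) = x \<otimes>\<^bsub>H\<^esub> y \<otimes>\<^bsub>H\<^esub> inv\<^bsub>H\<^esub> x \<otimes>\<^bsub>H\<^esub> inv\<^bsub>H\<^esub> y"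
  shows "wr_elem p S G 0 \<in> derived_set W (carrier W)"
proof -
  (* Coordinatewise, g v u = u v says U (i + 1) = G (i + 1) U i, and at the wrap-around
     i = p - 1 it says [x, y] y x = x y. *)
  define U where "U j = desc_prod H G j \<otimes>\<^bsub>H\<^esub> y \<otimes>\<^bsub>H\<^esub> x" for j
  define k where "k i = (if i = p - 1 then y else \<one>\<^bsub>H\<^esub>)" for i
  define u where "u = wr_elem p S U 0"
  define v where "v = wr_elem p S k 1"
  have GU: "desc_prod H G i \<in> carrier H" if "i < p" for i
    using G that by (intro H.desc_prod_closed) auto
  have U: "\<forall>i<p. U i \<in> carrier H"
    using GU xy by (simp add: U_def)
  have k: "\<forall>i<p. k i \<in> carrier H"
    using xy by (simp add: k_def)
  have step: "G ((i + 1) mod p) \<otimes>\<^bsub>H\<^esub> (k i \<otimes>\<^bsub>H\<^esub> U i) = U ((i + 1) mod p) \<otimes>\<^bsub>H\<^esub> k i"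
    if "i < p" for i
  proof (cases "i + 1 < p")
    case True
    then have "(i + 1) mod p = Suc i" "k i = \<one>\<^bsub>H\<^esub>"
      by (auto simp: k_def)
    then show ?thesis
      using that True G GU xy by (simp add: U_def H.m_assoc)
  next
    case False
    then have "i + 1 = p"
      using that by simp
    then have "i = p - 1" "(i + 1) mod p = 0"
      by auto
    moreover have "desc_prod H G (p - 1) \<otimes>\<^bsub>H\<^esub> (y \<otimes>\<^bsub>H\<^esub> x) = x \<otimes>\<^bsub>H\<^esub> y"
      using H.commutator_eq_iff[of "desc_prod H G (p - 1)" x y] prod xy GU p_pos by auto
    ultimately show ?thesis
      using G GU xy p_pos by (simp add: k_def U_def H.m_assoc)
  qed
  have "wr_elem p S G 0 \<otimes>\<^bsub>W\<^esub> (v \<otimes>\<^bsub>W\<^esub> u)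
      = wr_elem p S (\<lambda>i. G ((i + 1) mod p) \<otimes>\<^bsub>H\<^esub> (k i \<otimes>\<^bsub>H\<^esub> U i)) 1"
  proof -
    have "v \<otimes>\<^bsub>W\<^esub> u = wr_elem p S (\<lambda>i. k (i mod p) \<otimes>\<^bsub>H\<^esub> U i) 1"
      unfolding u_def v_def using U by (simp add: wr_elem_mult)
    also have "\<dots> = wr_elem p S (\<lambda>i. k i \<otimes>\<^bsub>H\<^esub> U i) 1"
      by (rule wr_elem_cong) simp_all
    finally have "v \<otimes>\<^bsub>W\<^esub> u = wr_elem p S (\<lambda>i. k i \<otimes>\<^bsub>H\<^esub> U i) 1" .
    then show ?thesis
      using k U by (simp add: wr_elem_mult)
  qed
  also have "\<dots> = wr_elem p S (\<lambda>i. U ((i + 1) mod p) \<otimes>\<^bsub>H\<^esub> k i) 1"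
    by (rule wr_elem_cong) (use step in simp_all)
  also have "\<dots> = u \<otimes>\<^bsub>W\<^esub> v"
    unfolding u_def v_def using k by (simp add: wr_elem_mult)
  finally have "wr_elem p S G 0 = u \<otimes>\<^bsub>W\<^esub> v \<otimes>\<^bsub>W\<^esub> inv\<^bsub>W\<^esub> u \<otimes>\<^bsub>W\<^esub> inv\<^bsub>W\<^esub> v"
    using W.commutator_eq_iff G U k wr_elem_closed by (simp add: u_def v_def)
  moreover have "u \<in> carrier W" "v \<in> carrier W"
    using U k wr_elem_closed by (simp_all add: u_def v_def)
  ultimately show ?thesis
    by blast
qed

lemma kernel_elem_commutator:
  assumes H': "derived H (carrier H) \<subseteq> derived_set H (carrier H)"
    and g: "g \<in> carrier W" "shift g = 0" "coord_prod g = \<one>\<^bsub>Hab\<^esub>"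
  shows "g \<in> derived_set W (carrier W)"
proof -
  have G: "\<forall>i<p. coord g i \<in> carrier H"
    using g coord_closed by blast
  have G': "\<forall>i\<le>p - 1. coord g i \<in> carrier H" and "{..p - 1} = {..<p}"
    using G p_pos by auto
  then have "ab (desc_prod H (coord g) (p - 1)) = coord_prod g"
    using ab.desc_prod_hom[OF Hab.comm_group_axioms] by (simp add: coord_prod_def)
  then have "derived H (carrier H) #>\<^bsub>H\<^esub> desc_prod H (coord g) (p - 1) = derived H (carrier H)"
    using g(3) by simp
  moreover have "desc_prod H (coord g) (p - 1) \<in> carrier H"
    using G' by (rule H.desc_prod_closed)
  ultimately have "desc_prod H (coord g) (p - 1) \<in> derived H (carrier H)"
    using H.coset_join1 H.derived_is_subgroup by blast
  then obtain x y where "x \<in> carrier H" "y \<in> carrier H"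
    "desc_prod H (coord g) (p - 1) = x \<otimes>\<^bsub>H\<^esub> y \<otimes>\<^bsub>H\<^esub> inv\<^bsub>H\<^esub> x \<otimes>\<^bsub>H\<^esub> inv\<^bsub>H\<^esub> y"
    using H' by blast
  then have "wr_elem p S (coord g) 0 \<in> derived_set W (carrier W)"
    using G by (rule wr_elem_commutator[rotated])
  then show ?thesis
    using wr_elem_coord_shift[OF g(1)] g(2) by simp
qed

lemma derived_W_subset_commutators:
  assumes "derived H (carrier H) \<subseteq> derived_set H (carrier H)"
  shows "derived W (carrier W) \<subseteq> derived_set W (carrier W)"
proof
  fix g assume g: "g \<in> derived W (carrier W)"
  then have "g \<in> kernel W (integer_mod_group p) (\<lambda>g. int (shift g))"
    using shift.derived_subset_kernel[OF abelian_integer_mod_group] by blast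
  moreover have "g \<in> kernel W Hab coord_prod"
    using g coord_prod.derived_subset_kernel[OF Hab.comm_group_axioms] by blast
  ultimately show "g \<in> derived_set W (carrier W)"
    using kernel_elem_commutator[OF assms] by (simp add: kernel_def)
qed

lemma W_moves_point:
  assumes "2 \<le> p"
  shows "\<exists>t\<in>carrier W. \<exists>x\<in>wr_points (p # ps). t x \<noteq> x"
proof -
  have "wr_elem p S (\<lambda>i. \<one>\<^bsub>H\<^esub>) 1 \<in> carrier W"
    by (rule wr_elem_closed) simp
  moreover have "0 # base_point \<in> wr_points (p # ps)"
    using base_point_in p_pos by simp
  moreover have "wr_elem p S (\<lambda>i. \<one>\<^bsub>H\<^esub>) 1 (0 # base_point) = 1 # base_point"
    using base_point_in assms by (simp add: wr_elem_def one_wreath_tower)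
  ultimately show ?thesis
    by (metis list.inject zero_neq_one)
qed

lemma derived_W_nontrivial:
  assumes "2 \<le> p" and t: "t \<in> carrier H" "x \<in> S" "t x \<noteq> x"
  shows "derived W (carrier W) \<noteq> {\<one>\<^bsub>W\<^esub>}"
proof
  assume trivial: "derived W (carrier W) = {\<one>\<^bsub>W\<^esub>}"
  define u where "u = wr_elem p S (\<lambda>i. if i = 0 then t else \<one>\<^bsub>H\<^esub>) 0"
  define v where "v = wr_elem p S (\<lambda>i. \<one>\<^bsub>H\<^esub>) 1"
  have uv: "u \<in> carrier W" "v \<in> carrier W"
    unfolding u_def v_def using t by (auto intro: wr_elem_closed)
  then have "u \<otimes>\<^bsub>W\<^esub> v \<otimes>\<^bsub>W\<^esub> inv\<^bsub>W\<^esub> u \<otimes>\<^bsub>W\<^esub> inv\<^bsub>W\<^esub> v \<in> derived W (carrier W)"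
    unfolding derived_def by (intro generate.incl) blast
  then have "v \<otimes>\<^bsub>W\<^esub> u = u \<otimes>\<^bsub>W\<^esub> v"
    using W.commutator_eq_iff[of "\<one>\<^bsub>W\<^esub>" u v] trivial uv by auto
  then have "(v \<circ> u) (0 # x) = (u \<circ> v) (0 # x)"
    by (simp add: mult_wreath_tower)
  moreover have "(u \<circ> v) (0 # x) = 1 # x" "(v \<circ> u) (0 # x) = 1 # t x"
    using t assms(1) wr_carrier_maps_points[of t ps x]
    by (simp_all add: u_def v_def wr_elem_def one_wreath_tower carrier_wreath_tower)
  ultimately show False
    using t(3) by simp
qed

end

lemma derived_wreath_tower_subset_commutators:
  "\<forall>q\<in>set ps. 0 < q \<Longrightarrow> derived (wreath_tower ps) (carrier (wreath_tower ps))
     \<subseteq> derived_set (wreath_tower ps) (carrier (wreath_tower ps))"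
proof (induction ps)
  case Nil
  let ?G = "wreath_tower []"
  interpret G: group ?G
    using group_wreath_tower by simp
  have "derived ?G (carrier ?G) \<subseteq> {\<one>\<^bsub>?G\<^esub>}"
    using G.derived_in_carrier[of "carrier ?G"] by (simp add: carrier_wreath_tower one_wreath_tower)
  moreover have "\<one>\<^bsub>?G\<^esub> = \<one>\<^bsub>?G\<^esub> \<otimes>\<^bsub>?G\<^esub> \<one>\<^bsub>?G\<^esub>
      \<otimes>\<^bsub>?G\<^esub> inv\<^bsub>?G\<^esub> \<one>\<^bsub>?G\<^esub> \<otimes>\<^bsub>?G\<^esub> inv\<^bsub>?G\<^esub> \<one>\<^bsub>?G\<^esub>"
    by simp
  ultimately show ?case
    using G.one_closed by blast
next
  case (Cons p ps)
  then interpret wreath_step p ps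
    by unfold_locales simp_all
  show ?case
    using Cons by (intro derived_W_subset_commutators) simp
qed

theorem corollary2:
  fixes ps :: "nat list"
  assumes "length ps \<ge> 2"
    and "\<forall>p \<in> set ps. p \<ge> 2"
  shows "commutator_width (wreath_tower ps) = 1"
proof -
  obtain p q rest where ps: "ps = p # q # rest"
    using assms(1) by (metis Suc_le_length_iff numeral_2_eq_2)
  have pos: "\<forall>r\<in>set ps. 0 < r"
    using assms(2) by fastforce
  interpret outer: wreath_step p "q # rest"
    using pos ps by unfold_locales simp_all
  interpret inner: wreath_step q rest
    using pos ps by unfold_locales simp_all
  obtain t x where "t \<in> carrier (wreath_tower (q # rest))" "x \<in> wr_points (q # rest)" "t x \<noteq> x"
    using inner.W_moves_point assms(2) ps by auto
  then have "derived (wreath_tower ps) (carrier (wreath_tower ps)) \<noteq> {\<one>\<^bsub>wreath_tower ps\<^esub>}"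
    using outer.derived_W_nontrivial assms(2) ps by simp
  then show ?thesis
    using outer.W.commutator_width_eq_1 derived_wreath_tower_subset_commutators[OF pos] ps by simp
qed

end
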